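(* Let $\mathcal{T}$ be a triangulated category, let $X$ and $Y$ be indecomposable objects of $\mathcal{T}$, and let $u:X\to Y$ be an irreducible morphism. Then the mapping cone $C_u$ (the third object of a distinguished triangle $X\xrightarrow{u}Y\to C_u\to X[1]$) is indecomposable.
   Context: A morphism is irreducible if it is neither a split monomorphism nor a split epimorphism, and whenever it factors as $hg$, either $g$ is a split monomorphism or $h$ is a split epimorphism. *)

theory Defs
  imports Main
begin

text \<open>A (small-or-large) category presented by a set of objects, hom-sets, composition
  (cmp g f = g after f) and identities; together with the preadditive structure,
  a shift automorphism and a class of distinguished triangles (X,u,Y,v,Z,w)
  meaning X --u--> Y --v--> Z --w--> X[1].\<close>

record ('o, 'm) tricat =
  Obj  :: "'o set"
  hom  :: "'o \<Rightarrow> 'o \<Rightarrow> 'm set"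
  cmp  :: "'m \<Rightarrow> 'm \<Rightarrow> 'm"
  idm  :: "'o \<Rightarrow> 'm"
  add  :: "'m \<Rightarrow> 'm \<Rightarrow> 'm"
  neg  :: "'m \<Rightarrow> 'm"
  zer  :: "'o \<Rightarrow> 'o \<Rightarrow> 'm"
  shO  :: "'o \<Rightarrow> 'o"
  shM  :: "'m \<Rightarrow> 'm"
  dist :: "('o \<times> 'm \<times> 'o \<times> 'm \<times> 'o \<times> 'm) set"

definition category :: "('o, 'm, 'x) tricat_scheme \<Rightarrow> bool" where
  "category T \<longleftrightarrow>
     (\<forall>X Y f. f \<in> hom T X Y \<longrightarrow> X \<in> Obj T \<and> Y \<in> Obj T)
   \<and> (\<forall>X Y X' Y' f. f \<in> hom T X Y \<longrightarrow> f \<in> hom T X' Y' \<longrightarrow> X = X' \<and> Y = Y')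
   \<and> (\<forall>X Y Z f g. f \<in> hom T X Y \<longrightarrow> g \<in> hom T Y Z \<longrightarrow> cmp T g f \<in> hom T X Z)
   \<and> (\<forall>W X Y Z f g h. f \<in> hom T W X \<longrightarrow> g \<in> hom T X Y \<longrightarrow> h \<in> hom T Y Z \<longrightarrow>
        cmp T h (cmp T g f) = cmp T (cmp T h g) f)
   \<and> (\<forall>X \<in> Obj T. idm T X \<in> hom T X X)
   \<and> (\<forall>X Y f. f \<in> hom T X Y \<longrightarrow> cmp T f (idm T X) = f \<and> cmp T (idm T Y) f = f)"

definition preadditive :: "('o, 'm, 'x) tricat_scheme \<Rightarrow> bool" where
  "preadditive T \<longleftrightarrow> category T
   \<and> (\<forall>X \<in> Obj T. \<forall>Y \<in> Obj T.
        zer T X Y \<in> hom T X Y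
      \<and> (\<forall>f \<in> hom T X Y. \<forall>g \<in> hom T X Y. add T f g \<in> hom T X Y)
      \<and> (\<forall>f \<in> hom T X Y. neg T f \<in> hom T X Y)
      \<and> (\<forall>f \<in> hom T X Y. \<forall>g \<in> hom T X Y. \<forall>h \<in> hom T X Y.
            add T (add T f g) h = add T f (add T g h))
      \<and> (\<forall>f \<in> hom T X Y. \<forall>g \<in> hom T X Y. add T f g = add T g f)
      \<and> (\<forall>f \<in> hom T X Y. add T f (zer T X Y) = f)
      \<and> (\<forall>f \<in> hom T X Y. add T f (neg T f) = zer T X Y))
   \<and> (\<forall>X Y Z f g g'. f \<in> hom T X Y \<longrightarrow> g \<in> hom T Y Z \<longrightarrow> g' \<in> hom T Y Z \<longrightarrow>
        cmp T (add T g g') f = add T (cmp T g f) (cmp T g' f))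
   \<and> (\<forall>X Y Z f f' g. f \<in> hom T X Y \<longrightarrow> f' \<in> hom T X Y \<longrightarrow> g \<in> hom T Y Z \<longrightarrow>
        cmp T g (add T f f') = add T (cmp T g f) (cmp T g f'))"

definition zero_object :: "('o, 'm, 'x) tricat_scheme \<Rightarrow> 'o \<Rightarrow> bool" where
  "zero_object T Z \<longleftrightarrow> Z \<in> Obj T \<and>
     (\<forall>X \<in> Obj T. (\<exists>!f. f \<in> hom T Z X) \<and> (\<exists>!f. f \<in> hom T X Z))"

definition biproduct :: "('o, 'm, 'x) tricat_scheme \<Rightarrow> 'o \<Rightarrow> 'o \<Rightarrow> 'o \<Rightarrow>
    'm \<Rightarrow> 'm \<Rightarrow> 'm \<Rightarrow> 'm \<Rightarrow> bool" where
  "biproduct T A B P i1 i2 p1 p2 \<longleftrightarrow>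
     i1 \<in> hom T A P \<and> i2 \<in> hom T B P \<and> p1 \<in> hom T P A \<and> p2 \<in> hom T P B
   \<and> cmp T p1 i1 = idm T A \<and> cmp T p2 i2 = idm T B
   \<and> cmp T p1 i2 = zer T B A \<and> cmp T p2 i1 = zer T A B
   \<and> add T (cmp T i1 p1) (cmp T i2 p2) = idm T P"

definition additive :: "('o, 'm, 'x) tricat_scheme \<Rightarrow> bool" where
  "additive T \<longleftrightarrow> preadditive T \<and> (\<exists>Z. zero_object T Z)
   \<and> (\<forall>A \<in> Obj T. \<forall>B \<in> Obj T. \<exists>P i1 i2 p1 p2. biproduct T A B P i1 i2 p1 p2)"

definition iso :: "('o, 'm, 'x) tricat_scheme \<Rightarrow> 'o \<Rightarrow> 'o \<Rightarrow> 'm \<Rightarrow> bool" where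
  "iso T X Y f \<longleftrightarrow> f \<in> hom T X Y \<and>
     (\<exists>g \<in> hom T Y X. cmp T g f = idm T X \<and> cmp T f g = idm T Y)"

definition shift_automorphism :: "('o, 'm, 'x) tricat_scheme \<Rightarrow> bool" where
  "shift_automorphism T \<longleftrightarrow>
     bij_betw (shO T) (Obj T) (Obj T)
   \<and> (\<forall>X \<in> Obj T. \<forall>Y \<in> Obj T. bij_betw (shM T) (hom T X Y) (hom T (shO T X) (shO T Y)))
   \<and> (\<forall>X Y Z f g. f \<in> hom T X Y \<longrightarrow> g \<in> hom T Y Z \<longrightarrow>
        shM T (cmp T g f) = cmp T (shM T g) (shM T f))
   \<and> (\<forall>X \<in> Obj T. shM T (idm T X) = idm T (shO T X))
   \<and> (\<forall>X Y f g. f \<in> hom T X Y \<longrightarrow> g \<in> hom T X Y \<longrightarrow>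
        shM T (add T f g) = add T (shM T f) (shM T g))"

definition triangle :: "('o, 'm, 'x) tricat_scheme \<Rightarrow> 'o \<Rightarrow> 'm \<Rightarrow> 'o \<Rightarrow> 'm \<Rightarrow> 'o \<Rightarrow> 'm \<Rightarrow> bool" where
  "triangle T X u Y v Z w \<longleftrightarrow> u \<in> hom T X Y \<and> v \<in> hom T Y Z \<and> w \<in> hom T Z (shO T X)"

definition tri_morphism :: "('o, 'm, 'x) tricat_scheme \<Rightarrow>
    'o \<Rightarrow> 'm \<Rightarrow> 'o \<Rightarrow> 'm \<Rightarrow> 'o \<Rightarrow> 'm \<Rightarrow>
    'o \<Rightarrow> 'm \<Rightarrow> 'o \<Rightarrow> 'm \<Rightarrow> 'o \<Rightarrow> 'm \<Rightarrow> 'm \<Rightarrow> 'm \<Rightarrow> 'm \<Rightarrow> bool" where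
  "tri_morphism T X u Y v Z w X' u' Y' v' Z' w' a b c \<longleftrightarrow>
     a \<in> hom T X X' \<and> b \<in> hom T Y Y' \<and> c \<in> hom T Z Z'
   \<and> cmp T b u = cmp T u' a \<and> cmp T c v = cmp T v' b
   \<and> cmp T (shM T a) w = cmp T w' c"

definition triangulated :: "('o, 'm, 'x) tricat_scheme \<Rightarrow> bool" where
  "triangulated T \<longleftrightarrow> additive T \<and> shift_automorphism T
   \<and> (\<forall>X u Y v Z w. (X, u, Y, v, Z, w) \<in> dist T \<longrightarrow> triangle T X u Y v Z w)
   \<comment> \<open>TR1: closed under isomorphism of triangles\<close>
   \<and> (\<forall>X u Y v Z w X' u' Y' v' Z' w' a b c.
        (X, u, Y, v, Z, w) \<in> dist T \<longrightarrow> triangle T X' u' Y' v' Z' w' \<longrightarrow>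
        tri_morphism T X u Y v Z w X' u' Y' v' Z' w' a b c \<longrightarrow>
        iso T X X' a \<longrightarrow> iso T Y Y' b \<longrightarrow> iso T Z Z' c \<longrightarrow>
        (X', u', Y', v', Z', w') \<in> dist T)
   \<comment> \<open>TR1: X --id--> X --> 0 --> X[1] is distinguished\<close>
   \<and> (\<forall>X \<in> Obj T. \<forall>Z. zero_object T Z \<longrightarrow>
        (X, idm T X, X, zer T X Z, Z, zer T Z (shO T X)) \<in> dist T)
   \<comment> \<open>TR1: every morphism extends to a distinguished triangle\<close>
   \<and> (\<forall>X Y u. u \<in> hom T X Y \<longrightarrow> (\<exists>v Z w. (X, u, Y, v, Z, w) \<in> dist T))
   \<comment> \<open>TR2: rotation\<close>
   \<and> (\<forall>X u Y v Z w. (X, u, Y, v, Z, w) \<in> dist T \<longleftrightarrow>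
        (Y, v, Z, w, shO T X, neg T (shM T u)) \<in> dist T)
   \<comment> \<open>TR3: completion of morphisms\<close>
   \<and> (\<forall>X u Y v Z w X' u' Y' v' Z' w' a b.
        (X, u, Y, v, Z, w) \<in> dist T \<longrightarrow> (X', u', Y', v', Z', w') \<in> dist T \<longrightarrow>
        a \<in> hom T X X' \<longrightarrow> b \<in> hom T Y Y' \<longrightarrow> cmp T b u = cmp T u' a \<longrightarrow>
        (\<exists>c \<in> hom T Z Z'. cmp T c v = cmp T v' b \<and> cmp T (shM T a) w = cmp T w' c))
   \<comment> \<open>TR4: octahedral axiom\<close>
   \<and> (\<forall>X Y Z u v Z' j k X' l i Y' m n.
        u \<in> hom T X Y \<longrightarrow> v \<in> hom T Y Z \<longrightarrow>
        (X, u, Y, j, Z', k) \<in> dist T \<longrightarrow>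
        (Y, v, Z, l, X', i) \<in> dist T \<longrightarrow>
        (X, cmp T v u, Z, m, Y', n) \<in> dist T \<longrightarrow>
        (\<exists>f g. f \<in> hom T Z' Y' \<and> g \<in> hom T Y' X'
           \<and> (Z', f, Y', g, X', cmp T (shM T j) i) \<in> dist T
           \<and> cmp T f j = cmp T m v \<and> cmp T n f = k
           \<and> cmp T g m = l \<and> cmp T i g = cmp T (shM T u) n))"

definition split_mono :: "('o, 'm, 'x) tricat_scheme \<Rightarrow> 'o \<Rightarrow> 'o \<Rightarrow> 'm \<Rightarrow> bool" where
  "split_mono T X Y f \<longleftrightarrow> f \<in> hom T X Y \<and> (\<exists>r \<in> hom T Y X. cmp T r f = idm T X)"

definition split_epi :: "('o, 'm, 'x) tricat_scheme \<Rightarrow> 'o \<Rightarrow> 'o \<Rightarrow> 'm \<Rightarrow> bool" where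
  "split_epi T X Y f \<longleftrightarrow> f \<in> hom T X Y \<and> (\<exists>s \<in> hom T Y X. cmp T f s = idm T Y)"

definition irreducible_mor :: "('o, 'm, 'x) tricat_scheme \<Rightarrow> 'o \<Rightarrow> 'o \<Rightarrow> 'm \<Rightarrow> bool" where
  "irreducible_mor T X Y f \<longleftrightarrow> f \<in> hom T X Y
   \<and> \<not> split_mono T X Y f \<and> \<not> split_epi T X Y f
   \<and> (\<forall>Z g h. g \<in> hom T X Z \<longrightarrow> h \<in> hom T Z Y \<longrightarrow> f = cmp T h g \<longrightarrow>
        split_mono T X Z g \<or> split_epi T Z Y h)"

definition indecomposable :: "('o, 'm, 'x) tricat_scheme \<Rightarrow> 'o \<Rightarrow> bool" where
  "indecomposable T X \<longleftrightarrow> X \<in> Obj T \<and> \<not> zero_object T X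
   \<and> (\<forall>A B i1 i2 p1 p2. biproduct T A B X i1 i2 p1 p2 \<longrightarrow>
        zero_object T A \<or> zero_object T B)"

end

theory Submission
  imports Defs
begin

text \<open>Suppose the cone \<open>C\<close> of \<open>u\<close> splits as \<open>C\<^sub>1 \<oplus> C\<^sub>2\<close> with both summands nonzero.
  Pulling the triangle back along the inclusion \<open>C\<^sub>1 \<rightarrow> C\<close> factors \<open>u\<close> as
  \<open>X \<rightarrow> Y\<^sub>1 \<rightarrow> Y\<close>, where \<open>X \<rightarrow> Y\<^sub>1 \<rightarrow> C\<^sub>1 \<rightarrow> X[1]\<close> is distinguished with last map
  \<open>w\<close> restricted to \<open>C\<^sub>1\<close>. By irreducibility either \<open>X \<rightarrow> Y\<^sub>1\<close> is a split mono, so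
  \<open>w\<close> vanishes on \<open>C\<^sub>1\<close> and \<open>C\<^sub>1\<close> becomes a summand of \<open>Y\<close>, or \<open>Y\<^sub>1 \<rightarrow> Y\<close> is a split epi,
  so the projection onto \<open>C\<^sub>2\<close> kills \<open>Y \<rightarrow> C\<close> and \<open>C\<^sub>2\<close> becomes a summand of \<open>X[1]\<close>.
  In a triangulated category a nonzero split summand of an indecomposable object is all of it,
  and in both cases this forces \<open>u = 0\<close>, which an irreducible morphism between nonzero objects
  cannot be. Similarly \<open>C \<noteq> 0\<close>, since otherwise \<open>u\<close> would be a split epi.\<close>

locale preadditive_cat =
  fixes T :: "('o, 'm, 'x) tricat_scheme"
  assumes preadditive: "preadditive T"
begin

lemma category: "category T"
  using preadditive unfolding preadditive_def by (rule conjunct1)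

lemma hom_dom_Obj: "f \<in> hom T X Y \<Longrightarrow> X \<in> Obj T"
  and hom_cod_Obj: "f \<in> hom T X Y \<Longrightarrow> Y \<in> Obj T"
  and cmp_hom: "f \<in> hom T X Y \<Longrightarrow> g \<in> hom T Y Z \<Longrightarrow> cmp T g f \<in> hom T X Z"
  and cmp_assoc: "f \<in> hom T W X \<Longrightarrow> g \<in> hom T X Y \<Longrightarrow> h \<in> hom T Y Z \<Longrightarrow>
      cmp T h (cmp T g f) = cmp T (cmp T h g) f"
  and idm_hom: "X \<in> Obj T \<Longrightarrow> idm T X \<in> hom T X X"
  and cmp_idm_right: "f \<in> hom T X Y \<Longrightarrow> cmp T f (idm T X) = f"
  and cmp_idm_left: "f \<in> hom T X Y \<Longrightarrow> cmp T (idm T Y) f = f"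
  using category unfolding category_def by meson+

lemma zer_hom: "X \<in> Obj T \<Longrightarrow> Y \<in> Obj T \<Longrightarrow> zer T X Y \<in> hom T X Y"
  using preadditive unfolding preadditive_def by meson

lemma
  assumes f: "f \<in> hom T X Y" and g: "g \<in> hom T X Y"
  shows add_hom: "add T f g \<in> hom T X Y"
    and hom_add_comm: "add T f g = add T g f"
  using preadditive f g hom_dom_Obj[OF f] hom_cod_Obj[OF f]
  unfolding preadditive_def by meson+

lemma hom_add_assoc:
  assumes f: "f \<in> hom T X Y" and g: "g \<in> hom T X Y" and h: "h \<in> hom T X Y"
  shows "add T (add T f g) h = add T f (add T g h)"
  using preadditive f g h hom_dom_Obj[OF f] hom_cod_Obj[OF f]
  unfolding preadditive_def by meson

lemma
  assumes f: "f \<in> hom T X Y"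
  shows neg_hom: "neg T f \<in> hom T X Y"
    and hom_add_zer: "add T f (zer T X Y) = f"
    and hom_add_neg: "add T f (neg T f) = zer T X Y"
  using preadditive f hom_dom_Obj[OF f] hom_cod_Obj[OF f]
  unfolding preadditive_def by meson+

lemma add_cmp_distrib: "f \<in> hom T X Y \<Longrightarrow> g \<in> hom T Y Z \<Longrightarrow> g' \<in> hom T Y Z \<Longrightarrow>
    cmp T (add T g g') f = add T (cmp T g f) (cmp T g' f)"
  and cmp_add_distrib: "f \<in> hom T X Y \<Longrightarrow> f' \<in> hom T X Y \<Longrightarrow> g \<in> hom T Y Z \<Longrightarrow>
    cmp T g (add T f f') = add T (cmp T g f) (cmp T g f')"
  using preadditive unfolding preadditive_def by meson+

lemma hom_zer_add: "f \<in> hom T X Y \<Longrightarrow> add T (zer T X Y) f = f"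
  by (metis hom_add_comm hom_add_zer hom_cod_Obj hom_dom_Obj zer_hom)

lemma add_idem_zer:
  assumes x: "x \<in> hom T X Y" and idem: "add T x x = x"
  shows "x = zer T X Y"
proof -
  have "zer T X Y = add T (add T x x) (neg T x)" using idem hom_add_neg[OF x] by simp
  also have "\<dots> = x" using hom_add_assoc neg_hom hom_add_neg hom_add_zer x by metis
  finally show ?thesis by simp
qed

lemma zer_cmp:
  assumes f: "f \<in> hom T X Y" and Z: "Z \<in> Obj T"
  shows "cmp T (zer T Y Z) f = zer T X Z"
proof (rule add_idem_zer)
  have z: "zer T Y Z \<in> hom T Y Z" using zer_hom hom_cod_Obj[OF f] Z .
  then show "cmp T (zer T Y Z) f \<in> hom T X Z" using cmp_hom f by blast
  show "add T (cmp T (zer T Y Z) f) (cmp T (zer T Y Z) f) = cmp T (zer T Y Z) f"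
    using add_cmp_distrib[OF f z z] hom_add_zer[OF z] by simp
qed

lemma cmp_zer:
  assumes g: "g \<in> hom T Y Z" and X: "X \<in> Obj T"
  shows "cmp T g (zer T X Y) = zer T X Z"
proof (rule add_idem_zer)
  have z: "zer T X Y \<in> hom T X Y" using zer_hom X hom_dom_Obj[OF g] .
  then show "cmp T g (zer T X Y) \<in> hom T X Z" using cmp_hom g by blast
  show "add T (cmp T g (zer T X Y)) (cmp T g (zer T X Y)) = cmp T g (zer T X Y)"
    using cmp_add_distrib[OF z z g] hom_add_zer[OF z] by simp
qed

lemma neg_unique:
  assumes a: "a \<in> hom T X Y" and b: "b \<in> hom T X Y" and ab: "add T a b = zer T X Y"
  shows "b = neg T a"
proof -
  have "neg T a = add T (add T (neg T a) a) b"
    using hom_add_assoc[OF neg_hom[OF a] a b] ab hom_add_zer neg_hom a by metis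
  also have "\<dots> = b" using hom_add_comm hom_add_neg hom_zer_add neg_hom a b by metis
  finally show ?thesis by simp
qed

lemma neg_neg: "a \<in> hom T X Y \<Longrightarrow> neg T (neg T a) = a"
  by (metis hom_add_comm hom_add_neg neg_hom neg_unique)

lemma neg_inject: "a \<in> hom T X Y \<Longrightarrow> b \<in> hom T X Y \<Longrightarrow> neg T a = neg T b \<longleftrightarrow> a = b"
  by (metis neg_neg)

lemma neg_zer: "X \<in> Obj T \<Longrightarrow> Y \<in> Obj T \<Longrightarrow> neg T (zer T X Y) = zer T X Y"
  by (metis hom_add_zer neg_unique zer_hom)

lemma cmp_neg:
  assumes f: "f \<in> hom T X Y" and g: "g \<in> hom T Y Z"
  shows "cmp T g (neg T f) = neg T (cmp T g f)"
proof (rule neg_unique)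
  show "cmp T g f \<in> hom T X Z" "cmp T g (neg T f) \<in> hom T X Z"
    using cmp_hom neg_hom f g by blast+
  show "add T (cmp T g f) (cmp T g (neg T f)) = zer T X Z"
    using cmp_add_distrib[OF f neg_hom[OF f] g] hom_add_neg[OF f] cmp_zer[OF g hom_dom_Obj[OF f]]
    by simp
qed

lemma neg_cmp:
  assumes f: "f \<in> hom T X Y" and g: "g \<in> hom T Y Z"
  shows "cmp T (neg T g) f = neg T (cmp T g f)"
proof (rule neg_unique)
  show "cmp T g f \<in> hom T X Z" "cmp T (neg T g) f \<in> hom T X Z"
    using cmp_hom neg_hom f g by blast+
  show "add T (cmp T g f) (cmp T (neg T g) f) = zer T X Z"
    using add_cmp_distrib[OF f g neg_hom[OF g]] hom_add_neg[OF g] zer_cmp[OF f hom_cod_Obj[OF g]]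
    by simp
qed

lemma zero_object_iff_idm_zer:
  assumes X: "X \<in> Obj T"
  shows "zero_object T X \<longleftrightarrow> idm T X = zer T X X"
proof
  assume "zero_object T X"
  then show "idm T X = zer T X X" using idm_hom zer_hom X unfolding zero_object_def by blast
next
  assume idm_zer: "idm T X = zer T X X"
  have from_X: "f = zer T X A" if "f \<in> hom T X A" for f A
    using cmp_idm_right[OF that] idm_zer cmp_zer[OF that X] by simp
  have to_X: "f = zer T A X" if "f \<in> hom T A X" for f A
    using cmp_idm_left[OF that] idm_zer zer_cmp[OF that X] by simp
  show "zero_object T X"
    unfolding zero_object_def using X zer_hom from_X to_X by blast
qed

lemma hom_into_zero_object:
  assumes "zero_object T Z" and f: "f \<in> hom T A Z"
  shows "f = zer T A Z"
  using assms cmp_idm_left[OF f] zer_cmp[OF f] hom_cod_Obj[OF f] zero_object_iff_idm_zer by metis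

lemma cmp_through_zero_object:
  assumes "zero_object T Z" and g: "g \<in> hom T A Z" and h: "h \<in> hom T Z B"
  shows "cmp T h g = zer T A B"
  using assms hom_into_zero_object cmp_zer hom_dom_Obj by metis

end

locale shifted_preadditive_cat = preadditive_cat +
  assumes shift_automorphism: "shift_automorphism T"
begin

lemma shO_Obj: "X \<in> Obj T \<Longrightarrow> shO T X \<in> Obj T"
  and shO_surj: "Y \<in> Obj T \<Longrightarrow> \<exists>X\<in>Obj T. Y = shO T X"
  using shift_automorphism unfolding shift_automorphism_def bij_betw_def by blast+

lemma shM_bij: "X \<in> Obj T \<Longrightarrow> Y \<in> Obj T \<Longrightarrow>
    bij_betw (shM T) (hom T X Y) (hom T (shO T X) (shO T Y))"
  using shift_automorphism unfolding shift_automorphism_def by meson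

lemma shM_hom: "f \<in> hom T X Y \<Longrightarrow> shM T f \<in> hom T (shO T X) (shO T Y)"
  using shM_bij hom_dom_Obj hom_cod_Obj unfolding bij_betw_def by blast

lemma shM_inject: "f \<in> hom T X Y \<Longrightarrow> g \<in> hom T X Y \<Longrightarrow> shM T f = shM T g \<longleftrightarrow> f = g"
  using shM_bij hom_dom_Obj hom_cod_Obj unfolding bij_betw_def inj_on_def by blast

lemma shM_surj:
  "X \<in> Obj T \<Longrightarrow> Y \<in> Obj T \<Longrightarrow> h \<in> hom T (shO T X) (shO T Y) \<Longrightarrow> \<exists>f\<in>hom T X Y. h = shM T f"
  using shM_bij unfolding bij_betw_def by blast

lemma shM_cmp: "f \<in> hom T X Y \<Longrightarrow> g \<in> hom T Y Z \<Longrightarrow> shM T (cmp T g f) = cmp T (shM T g) (shM T f)"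
  and shM_idm: "X \<in> Obj T \<Longrightarrow> shM T (idm T X) = idm T (shO T X)"
  and shM_add: "f \<in> hom T X Y \<Longrightarrow> g \<in> hom T X Y \<Longrightarrow> shM T (add T f g) = add T (shM T f) (shM T g)"
  using shift_automorphism unfolding shift_automorphism_def by meson+

lemma shM_zer:
  assumes X: "X \<in> Obj T" and Y: "Y \<in> Obj T"
  shows "shM T (zer T X Y) = zer T (shO T X) (shO T Y)"
  using add_idem_zer shM_hom shM_add hom_add_zer zer_hom[OF X Y] by metis

lemma neg_shM_surj:
  assumes X: "X \<in> Obj T" and Y: "Y \<in> Obj T" and h: "h \<in> hom T (shO T X) (shO T Y)"
  shows "\<exists>f\<in>hom T X Y. h = neg T (shM T f)"
  using shM_surj[OF X Y neg_hom[OF h]] neg_neg[OF h] by metis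

lemma zero_object_shift_iff:
  assumes X: "X \<in> Obj T"
  shows "zero_object T (shO T X) \<longleftrightarrow> zero_object T X"
  using zero_object_iff_idm_zer shO_Obj shM_idm shM_zer shM_inject idm_hom zer_hom X by metis

lemma biproduct_shift_reflect:
  assumes j1: "j1 \<in> hom T A X" and j2: "j2 \<in> hom T B X"
    and q1: "q1 \<in> hom T X A" and q2: "q2 \<in> hom T X B"
    and bp: "biproduct T (shO T A) (shO T B) (shO T X) (shM T j1) (shM T j2) (shM T q1) (shM T q2)"
  shows "biproduct T A B X j1 j2 q1 q2"
proof -
  have A: "A \<in> Obj T" and B: "B \<in> Obj T" and X: "X \<in> Obj T"
    using hom_dom_Obj j1 j2 q1 by blast+
  have "shM T (cmp T q1 j1) = shM T (idm T A)" "shM T (cmp T q2 j2) = shM T (idm T B)"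
    "shM T (cmp T q1 j2) = shM T (zer T B A)" "shM T (cmp T q2 j1) = shM T (zer T A B)"
    "shM T (add T (cmp T j1 q1) (cmp T j2 q2)) = shM T (idm T X)"
    using bp shM_cmp shM_idm shM_zer shM_add[OF cmp_hom[OF q1 j1] cmp_hom[OF q2 j2]] assms A B X
    unfolding biproduct_def by auto
  then have "cmp T q1 j1 = idm T A" "cmp T q2 j2 = idm T B"
    "cmp T q1 j2 = zer T B A" "cmp T q2 j1 = zer T A B"
    "add T (cmp T j1 q1) (cmp T j2 q2) = idm T X"
    using shM_inject[OF cmp_hom[OF j1 q1] idm_hom[OF A]] shM_inject[OF cmp_hom[OF j2 q2] idm_hom[OF B]]
      shM_inject[OF cmp_hom[OF j2 q1] zer_hom[OF B A]] shM_inject[OF cmp_hom[OF j1 q2] zer_hom[OF A B]]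
      shM_inject[OF add_hom[OF cmp_hom[OF q1 j1] cmp_hom[OF q2 j2]] idm_hom[OF X]]
    by simp_all
  then show ?thesis using assms unfolding biproduct_def by blast
qed

lemma indecomposable_shift:
  assumes ind: "indecomposable T X"
  shows "indecomposable T (shO T X)"
  unfolding indecomposable_def
proof (intro conjI allI impI)
  have X: "X \<in> Obj T" using ind unfolding indecomposable_def by blast
  then show "shO T X \<in> Obj T" by (rule shO_Obj)
  show "\<not> zero_object T (shO T X)" using ind X zero_object_shift_iff unfolding indecomposable_def by blast
  fix A B i1 i2 p1 p2
  assume bp: "biproduct T A B (shO T X) i1 i2 p1 p2"
  then have h: "i1 \<in> hom T A (shO T X)" "i2 \<in> hom T B (shO T X)"
    "p1 \<in> hom T (shO T X) A" "p2 \<in> hom T (shO T X) B"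
    unfolding biproduct_def by auto
  obtain A' where A': "A' \<in> Obj T" "A = shO T A'" using shO_surj hom_dom_Obj h(1) by blast
  obtain B' where B': "B' \<in> Obj T" "B = shO T B'" using shO_surj hom_dom_Obj h(2) by blast
  obtain j1 where "j1 \<in> hom T A' X" "i1 = shM T j1" using shM_surj[OF A'(1) X] h(1) A'(2) by blast
  moreover obtain j2 where "j2 \<in> hom T B' X" "i2 = shM T j2" using shM_surj[OF B'(1) X] h(2) B'(2) by blast
  moreover obtain q1 where "q1 \<in> hom T X A'" "p1 = shM T q1" using shM_surj[OF X A'(1)] h(3) A'(2) by blast
  moreover obtain q2 where "q2 \<in> hom T X B'" "p2 = shM T q2" using shM_surj[OF X B'(1)] h(4) B'(2) by blast
  ultimately have "biproduct T A' B' X j1 j2 q1 q2"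
    using biproduct_shift_reflect bp A' B' by simp
  then have "zero_object T A' \<or> zero_object T B'" using ind unfolding indecomposable_def by blast
  then show "zero_object T A \<or> zero_object T B" using zero_object_shift_iff A' B' by blast
qed

end

locale triangulated_cat =
  fixes T :: "('o, 'm, 'x) tricat_scheme"
  assumes triangulated: "triangulated T"

sublocale triangulated_cat \<subseteq> shifted_preadditive_cat
proof
  show "preadditive T" using triangulated unfolding triangulated_def additive_def by (elim conjE)
  show "shift_automorphism T" using triangulated unfolding triangulated_def by (elim conjE)
qed

context triangulated_cat
begin

lemma zero_object_exists: "\<exists>Z. zero_object T Z"
  using triangulated unfolding triangulated_def additive_def by (elim conjE)

lemma dist_hom:
  assumes "(X, u, Y, v, Z, w) \<in> dist T"
  shows "u \<in> hom T X Y \<and> v \<in> hom T Y Z \<and> w \<in> hom T Z (shO T X)"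
proof -
  have "\<forall>X u Y v Z w. (X, u, Y, v, Z, w) \<in> dist T \<longrightarrow> triangle T X u Y v Z w"
    using triangulated unfolding triangulated_def by (elim conjE)
  then show ?thesis using assms unfolding triangle_def by blast
qed

lemma dist_idm:
  assumes "X \<in> Obj T" and "zero_object T Z"
  shows "(X, idm T X, X, zer T X Z, Z, zer T Z (shO T X)) \<in> dist T"
proof -
  have "\<forall>X \<in> Obj T. \<forall>Z. zero_object T Z \<longrightarrow> (X, idm T X, X, zer T X Z, Z, zer T Z (shO T X)) \<in> dist T"
    using triangulated unfolding triangulated_def by (elim conjE)
  then show ?thesis using assms by blast
qed

lemma dist_exists:
  assumes "u \<in> hom T X Y"
  shows "\<exists>v Z w. (X, u, Y, v, Z, w) \<in> dist T"
proof -
  have "\<forall>X Y u. u \<in> hom T X Y \<longrightarrow> (\<exists>v Z w. (X, u, Y, v, Z, w) \<in> dist T)"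
    using triangulated unfolding triangulated_def by (elim conjE)
  then show ?thesis using assms by blast
qed

lemma dist_rotate:
  "(X, u, Y, v, Z, w) \<in> dist T \<longleftrightarrow> (Y, v, Z, w, shO T X, neg T (shM T u)) \<in> dist T"
proof -
  have "\<forall>X u Y v Z w. (X, u, Y, v, Z, w) \<in> dist T \<longleftrightarrow>
      (Y, v, Z, w, shO T X, neg T (shM T u)) \<in> dist T"
    using triangulated unfolding triangulated_def by (elim conjE)
  then show ?thesis by blast
qed

lemma dist_complete:
  assumes "(X, u, Y, v, Z, w) \<in> dist T" and "(X', u', Y', v', Z', w') \<in> dist T"
    and "a \<in> hom T X X'" and "b \<in> hom T Y Y'" and "cmp T b u = cmp T u' a"
  shows "\<exists>c\<in>hom T Z Z'. cmp T c v = cmp T v' b \<and> cmp T (shM T a) w = cmp T w' c"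
proof -
  have "\<forall>X u Y v Z w X' u' Y' v' Z' w' a b.
      (X, u, Y, v, Z, w) \<in> dist T \<longrightarrow> (X', u', Y', v', Z', w') \<in> dist T \<longrightarrow>
      a \<in> hom T X X' \<longrightarrow> b \<in> hom T Y Y' \<longrightarrow> cmp T b u = cmp T u' a \<longrightarrow>
      (\<exists>c \<in> hom T Z Z'. cmp T c v = cmp T v' b \<and> cmp T (shM T a) w = cmp T w' c)"
    using triangulated unfolding triangulated_def by (elim conjE)
  then show ?thesis using assms by blast
qed

lemma dist_cmp_zer:
  assumes d: "(X, u, Y, v, Z, w) \<in> dist T"
  shows "cmp T v u = zer T X Z"
proof -
  obtain Z0 where Z0: "zero_object T Z0" using zero_object_exists by blast
  have u: "u \<in> hom T X Y" using dist_hom d by blast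
  have X: "X \<in> Obj T" using hom_dom_Obj u .
  obtain c where "c \<in> hom T Z0 Z" "cmp T c (zer T X Z0) = cmp T v u"
    using dist_complete[OF dist_idm[OF X Z0] d idm_hom[OF X] u refl] by blast
  then show ?thesis using cmp_zer X by metis
qed

lemma dist_shift_cmp_zer:
  assumes d: "(X, u, Y, v, Z, w) \<in> dist T"
  shows "cmp T (shM T u) w = zer T Z (shO T Y)"
proof -
  have u: "u \<in> hom T X Y" and w: "w \<in> hom T Z (shO T X)" using dist_hom d by blast+
  have Z: "Z \<in> Obj T" and SY: "shO T Y \<in> Obj T" using hom_dom_Obj w shO_Obj hom_cod_Obj u by blast+
  have "(Z, w, shO T X, neg T (shM T u), shO T Y, neg T (shM T v)) \<in> dist T"
    using d dist_rotate by blast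
  then have "neg T (cmp T (shM T u) w) = zer T Z (shO T Y)"
    using dist_cmp_zer neg_cmp[OF w shM_hom[OF u]] by simp
  then show ?thesis using neg_neg cmp_hom[OF w shM_hom[OF u]] neg_zer[OF Z SY] by metis
qed

lemma dist_split_mono_third_zer:
  assumes d: "(X, u, Y, v, Z, w) \<in> dist T" and "split_mono T X Y u"
  shows "w = zer T Z (shO T X)"
proof -
  obtain r where r: "r \<in> hom T Y X" "cmp T r u = idm T X"
    using \<open>split_mono T X Y u\<close> unfolding split_mono_def by blast
  have u: "u \<in> hom T X Y" and w: "w \<in> hom T Z (shO T X)" using dist_hom d by blast+
  have X: "X \<in> Obj T" and Z: "Z \<in> Obj T" using hom_dom_Obj u w by blast+
  have "w = cmp T (shM T (cmp T r u)) w" using r(2) shM_idm[OF X] cmp_idm_left[OF w] by simp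
  also have "\<dots> = cmp T (shM T r) (cmp T (shM T u) w)"
    using shM_cmp[OF u r(1)] cmp_assoc[OF w shM_hom[OF u] shM_hom[OF r(1)]] by simp
  also have "\<dots> = zer T Z (shO T X)"
    using dist_shift_cmp_zer[OF d] cmp_zer[OF shM_hom[OF r(1)] Z] by simp
  finally show ?thesis .
qed

lemma dist_factor_first:
  assumes d: "(X, u, Y, v, Z, w) \<in> dist T" and g: "g \<in> hom T W Y"
    and vg: "cmp T v g = zer T W Z"
  shows "\<exists>h\<in>hom T W X. g = cmp T u h"
proof -
  obtain Z0 where Z0: "zero_object T Z0" using zero_object_exists by blast
  have u: "u \<in> hom T X Y" and v: "v \<in> hom T Y Z" using dist_hom d by blast+
  have W: "W \<in> Obj T" and X: "X \<in> Obj T" and Z: "Z \<in> Obj T" and Z0_Obj: "Z0 \<in> Obj T"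
    using hom_dom_Obj hom_cod_Obj g u v Z0 unfolding zero_object_def by blast+
  have d0: "(W, zer T W Z0, Z0, zer T Z0 (shO T W), shO T W, neg T (shM T (idm T W))) \<in> dist T"
    using dist_idm[OF W Z0] dist_rotate by blast
  have "cmp T (zer T Z0 Z) (zer T W Z0) = cmp T v g"
    using vg zer_cmp[OF zer_hom[OF W Z0_Obj] Z] by simp
  then obtain c where c: "c \<in> hom T (shO T W) (shO T X)"
      "cmp T (shM T g) (neg T (shM T (idm T W))) = cmp T (neg T (shM T u)) c"
    using dist_complete[OF d0 dist_rotate[THEN iffD1, OF d] g zer_hom[OF Z0_Obj Z]] by blast
  have sg: "shM T g \<in> hom T (shO T W) (shO T Y)" and su: "shM T u \<in> hom T (shO T X) (shO T Y)"
    using shM_hom g u by blast+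
  have "neg T (shM T g) = neg T (cmp T (shM T u) c)"
    using c(2) shM_idm[OF W] cmp_neg[OF idm_hom[OF shO_Obj[OF W]] sg] cmp_idm_right[OF sg]
      neg_cmp[OF c(1) su] by simp
  then have shift_g: "shM T g = cmp T (shM T u) c" using neg_inject sg cmp_hom[OF c(1) su] by blast
  obtain h where h: "h \<in> hom T W X" "c = shM T h" using shM_surj[OF W X c(1)] by blast
  have "g = cmp T u h" using shift_g h shM_cmp[OF h(1) u] shM_inject[OF g cmp_hom[OF h(1) u]] by simp
  then show ?thesis using h(1) by blast
qed

lemma dist_factor_third:
  assumes d: "(X, u, Y, v, Z, w) \<in> dist T" and g: "g \<in> hom T Y W"
    and gu: "cmp T g u = zer T X W"
  shows "\<exists>c\<in>hom T Z W. g = cmp T c v"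
proof -
  obtain Z0 where Z0: "zero_object T Z0" using zero_object_exists by blast
  have u: "u \<in> hom T X Y" using dist_hom d by blast
  have W: "W \<in> Obj T" and X: "X \<in> Obj T" and Z0_Obj: "Z0 \<in> Obj T"
    using hom_dom_Obj hom_cod_Obj g u Z0 unfolding zero_object_def by blast+
  have "(W, idm T W, W, zer T W (shO T Z0), shO T Z0, zer T (shO T Z0) (shO T W)) \<in> dist T"
    using dist_idm[OF W] zero_object_shift_iff[OF Z0_Obj] Z0 by blast
  moreover have "neg T (shM T (zer T Z0 W)) = zer T (shO T Z0) (shO T W)"
    using shM_zer[OF Z0_Obj W] neg_zer[OF shO_Obj[OF Z0_Obj] shO_Obj[OF W]] by simp
  ultimately have d0: "(Z0, zer T Z0 W, W, idm T W, W, zer T W (shO T Z0)) \<in> dist T"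
    using dist_rotate[of Z0 "zer T Z0 W" W "idm T W" W "zer T W (shO T Z0)"] by simp
  have "cmp T g u = cmp T (zer T Z0 W) (zer T X Z0)"
    using gu zer_cmp[OF zer_hom[OF X Z0_Obj] W] by simp
  then obtain c where "c \<in> hom T Z W" "cmp T c v = cmp T (idm T W) g"
    using dist_complete[OF d d0 zer_hom[OF X Z0_Obj] g] by blast
  then show ?thesis using cmp_idm_left[OF g] by auto
qed

lemma dist_split_mono_second_split_epi:
  assumes d: "(X, u, Y, v, Z, w) \<in> dist T" and "split_mono T X Y u"
  shows "split_epi T Y Z v"
proof -
  have v: "v \<in> hom T Y Z" and w: "w \<in> hom T Z (shO T X)" using dist_hom d by blast+
  have Z: "Z \<in> Obj T" using hom_dom_Obj w .
  have "cmp T w (idm T Z) = zer T Z (shO T X)"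
    using dist_split_mono_third_zer[OF assms] cmp_idm_right[OF w] by simp
  then obtain t where "t \<in> hom T Z Y" "idm T Z = cmp T v t"
    using dist_factor_first[OF dist_rotate[THEN iffD1, OF d] idm_hom[OF Z]] by blast
  then show ?thesis using v unfolding split_epi_def by auto
qed

text \<open>The triangle on a split mono \<open>m\<close> splits: its second map \<open>q\<close> has a section \<open>t\<close>,
  and \<open>1 - t q\<close> factors through \<open>m\<close>.\<close>

lemma split_mono_biproduct:
  assumes "split_mono T A B m"
  shows "\<exists>K t r' q. biproduct T A K B m t r' q"
proof -
  obtain r where m: "m \<in> hom T A B" and r: "r \<in> hom T B A" and rm: "cmp T r m = idm T A"
    using assms unfolding split_mono_def by blast
  have A: "A \<in> Obj T" and B: "B \<in> Obj T" using hom_dom_Obj hom_cod_Obj m by blast+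
  obtain q K h where d: "(A, m, B, q, K, h) \<in> dist T" using dist_exists m by blast
  have q: "q \<in> hom T B K" and qm: "cmp T q m = zer T A K" using dist_hom[OF d] dist_cmp_zer[OF d] by blast+
  obtain t where t: "t \<in> hom T K B" and qt: "cmp T q t = idm T K"
    using dist_split_mono_second_split_epi[OF d assms] unfolding split_epi_def by blast
  have K: "K \<in> Obj T" using hom_dom_Obj t .
  have tq: "cmp T t q \<in> hom T B B" using cmp_hom q t .
  define e where "e = add T (idm T B) (neg T (cmp T t q))"
  have e: "e \<in> hom T B B" unfolding e_def using add_hom idm_hom[OF B] neg_hom[OF tq] .
  have cmp_e: "cmp T e x = add T x (neg T (cmp T t (cmp T q x)))" if x: "x \<in> hom T U B" for x U
    unfolding e_def using add_cmp_distrib[OF x idm_hom[OF B] neg_hom[OF tq]] cmp_idm_left[OF x]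
      neg_cmp[OF x tq] cmp_assoc[OF x q t] by simp
  have "cmp T q e = add T q (neg T (cmp T (cmp T q t) q))"
    unfolding e_def using cmp_add_distrib[OF idm_hom[OF B] neg_hom[OF tq] q] cmp_idm_right[OF q]
      cmp_neg[OF tq q] cmp_assoc[OF q t q] by simp
  then have "cmp T q e = zer T B K" using qt cmp_idm_left[OF q] hom_add_neg[OF q] by simp
  then obtain r' where r': "r' \<in> hom T B A" and e_def': "e = cmp T m r'"
    using dist_factor_first[OF d e] by blast
  have r'_via_e: "cmp T r' x = cmp T r (cmp T e x)" if x: "x \<in> hom T U B" for x U
    using rm cmp_idm_left[OF cmp_hom[OF x r']] e_def' cmp_assoc[OF x r' m] cmp_assoc[OF cmp_hom[OF x r'] m r]
    by simp
  have "cmp T e m = m"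
    using cmp_e[OF m] qm cmp_zer[OF t A] neg_zer[OF A B] hom_add_zer[OF m] by simp
  then have r'm: "cmp T r' m = idm T A" using r'_via_e[OF m] rm by simp
  have "cmp T e t = zer T K B" using cmp_e[OF t] qt cmp_idm_right[OF t] hom_add_neg[OF t] by simp
  then have r't: "cmp T r' t = zer T K A" using r'_via_e[OF t] cmp_zer[OF r K] by simp
  have "add T (cmp T m r') (cmp T t q) = add T (idm T B) (add T (neg T (cmp T t q)) (cmp T t q))"
    unfolding e_def'[symmetric] e_def using hom_add_assoc[OF idm_hom[OF B] neg_hom[OF tq] tq] .
  then have "add T (cmp T m r') (cmp T t q) = idm T B"
    using hom_add_comm[OF neg_hom[OF tq] tq] hom_add_neg[OF tq] hom_add_zer[OF idm_hom[OF B]] by simp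
  then show ?thesis unfolding biproduct_def using m t r' q r'm qt r't qm by blast
qed

lemma split_mono_indecomposable_iso:
  assumes "split_mono T A B m" and "\<not> zero_object T A" and "indecomposable T B"
  shows "iso T A B m"
proof -
  obtain K t r' q where bp: "biproduct T A K B m t r' q" using split_mono_biproduct assms(1) by blast
  then have "zero_object T K" using assms(2,3) unfolding indecomposable_def by blast
  then have "cmp T t q = zer T B B" using cmp_through_zero_object bp unfolding biproduct_def by blast
  then have "cmp T m r' = idm T B" using bp hom_add_zer cmp_hom unfolding biproduct_def by metis
  then show ?thesis using bp unfolding iso_def biproduct_def by blast
qed

lemma dist_third_zero_object_split_epi:
  assumes d: "(X, u, Y, v, Z, w) \<in> dist T" and Z: "zero_object T Z"
  shows "split_epi T X Y u"
proof -
  have u: "u \<in> hom T X Y" and v: "v \<in> hom T Y Z" using dist_hom d by blast+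
  have "cmp T v (idm T Y) = zer T Y Z" using hom_into_zero_object[OF Z v] cmp_idm_right[OF v] by simp
  then obtain s where "s \<in> hom T Y X" "idm T Y = cmp T u s"
    using dist_factor_first[OF d idm_hom[OF hom_cod_Obj[OF u]]] by blast
  then show ?thesis using u unfolding split_epi_def by auto
qed

text \<open>Complete \<open>w i\<close> to a triangle and rotate it back; TR3 between the twice rotated
  triangles yields \<open>f\<close>, up to the shift.\<close>

lemma dist_pullback_third:
  assumes d: "(X, u, Y, v, Z, w) \<in> dist T" and i: "i \<in> hom T Z' Z"
  shows "\<exists>Y' u' v' f. (X, u', Y', v', Z', cmp T w i) \<in> dist T \<and> f \<in> hom T Y' Y
    \<and> u = cmp T f u' \<and> cmp T i v' = cmp T v f"
proof -
  have u: "u \<in> hom T X Y" and v: "v \<in> hom T Y Z" and w: "w \<in> hom T Z (shO T X)"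
    using dist_hom d by blast+
  have X: "X \<in> Obj T" and Y: "Y \<in> Obj T" and Z': "Z' \<in> Obj T"
    using hom_dom_Obj hom_cod_Obj u i by blast+
  have wi: "cmp T w i \<in> hom T Z' (shO T X)" using cmp_hom i w .
  obtain a E b where dE: "(Z', cmp T w i, shO T X, a, E, b) \<in> dist T" using dist_exists wi by blast
  have a: "a \<in> hom T (shO T X) E" and b: "b \<in> hom T E (shO T Z')" using dist_hom dE by blast+
  obtain Y' where Y': "Y' \<in> Obj T" "E = shO T Y'" using shO_surj hom_cod_Obj a by blast
  obtain u' where u': "u' \<in> hom T X Y'" "a = neg T (shM T u')" using neg_shM_surj X Y' a by blast
  obtain v' where v': "v' \<in> hom T Y' Z'" "b = neg T (shM T v')" using neg_shM_surj Y' Z' b by blast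
  have d2': "(Z', cmp T w i, shO T X, neg T (shM T u'), shO T Y', neg T (shM T v')) \<in> dist T"
    using dE Y' u' v' by simp
  then have d': "(X, u', Y', v', Z', cmp T w i) \<in> dist T"
    using dist_rotate[of X u' Y' v' Z' "cmp T w i"] dist_rotate[of Y' v' Z' "cmp T w i"] by blast
  have d2: "(Z, w, shO T X, neg T (shM T u), shO T Y, neg T (shM T v)) \<in> dist T"
    using d dist_rotate by blast
  have "cmp T (idm T (shO T X)) (cmp T w i) = cmp T w i" using cmp_idm_left[OF wi] .
  then obtain c where c: "c \<in> hom T (shO T Y') (shO T Y)"
      "cmp T c (neg T (shM T u')) = cmp T (neg T (shM T u)) (idm T (shO T X))"
      "cmp T (shM T i) (neg T (shM T v')) = cmp T (neg T (shM T v)) c"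
    using dist_complete[OF d2' d2 i idm_hom[OF shO_Obj[OF X]]] by blast
  obtain f where f: "f \<in> hom T Y' Y" "c = shM T f" using shM_surj[OF Y'(1) Y c(1)] by blast
  have "neg T (shM T (cmp T f u')) = neg T (shM T u)"
    using c(2) f shM_cmp[OF u'(1) f(1)] cmp_neg[OF shM_hom[OF u'(1)] c(1)]
      cmp_idm_right[OF neg_hom[OF shM_hom[OF u]]] by simp
  then have "u = cmp T f u'"
    using neg_inject shM_inject shM_hom cmp_hom[OF u'(1) f(1)] u by metis
  moreover have "neg T (shM T (cmp T i v')) = neg T (shM T (cmp T v f))"
    using c(3) f shM_cmp[OF v'(1) i] shM_cmp[OF f(1) v] cmp_neg[OF shM_hom[OF v'(1)] shM_hom[OF i]]
      neg_cmp[OF c(1) shM_hom[OF v]] by simp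
  then have "cmp T i v' = cmp T v f"
    using neg_inject shM_inject shM_hom cmp_hom[OF v'(1) i] cmp_hom[OF f(1) v] by metis
  ultimately show ?thesis using d' f(1) by blast
qed

lemma dist_first_zer_of_retract_killing_second:
  assumes d: "(X, u, Y, v, Z, w) \<in> dist T"
    and p: "p \<in> hom T Z Z'" and s: "s \<in> hom T Z' Z" and ps: "cmp T p s = idm T Z'"
    and pv: "cmp T p v = zer T Y Z'"
    and nz: "\<not> zero_object T Z'" and indX: "indecomposable T X"
  shows "u = zer T X Y"
proof -
  have u: "u \<in> hom T X Y" and w: "w \<in> hom T Z (shO T X)" using dist_hom d by blast+
  have X: "X \<in> Obj T" and Y: "Y \<in> Obj T" and Z': "Z' \<in> Obj T"
    using hom_dom_Obj hom_cod_Obj u s by blast+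
  obtain c where c: "c \<in> hom T (shO T X) Z'" "p = cmp T c w"
    using dist_factor_third[OF dist_rotate[THEN iffD1, OF d] p pv] by blast
  have ws: "cmp T w s \<in> hom T Z' (shO T X)" using cmp_hom s w .
  have "cmp T c (cmp T w s) = idm T Z'" using ps c cmp_assoc[OF s w c(1)] by simp
  then have "iso T Z' (shO T X) (cmp T w s)"
    using split_mono_indecomposable_iso nz indecomposable_shift[OF indX] ws c(1)
    unfolding split_mono_def by blast
  then obtain e where e: "e \<in> hom T (shO T X) Z'" "cmp T (cmp T w s) e = idm T (shO T X)"
    unfolding iso_def by blast
  have su: "shM T u \<in> hom T (shO T X) (shO T Y)" using shM_hom u .
  have "shM T u = cmp T (shM T u) (cmp T (cmp T w s) e)" using e(2) cmp_idm_right[OF su] by simp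
  also have "\<dots> = cmp T (cmp T (cmp T (shM T u) w) s) e"
    using cmp_assoc[OF e(1) ws su] cmp_assoc[OF s w su] by simp
  also have "\<dots> = shM T (zer T X Y)"
    using dist_shift_cmp_zer[OF d] zer_cmp[OF s shO_Obj[OF Y]] zer_cmp[OF e(1) shO_Obj[OF Y]]
      shM_zer[OF X Y] by simp
  finally show ?thesis using shM_inject[OF u zer_hom[OF X Y]] by simp
qed

lemma dist_first_zer_of_section_killing_third:
  assumes d: "(X, u, Y, v, Z, w) \<in> dist T"
    and i: "i \<in> hom T Z' Z" and p: "p \<in> hom T Z Z'" and pi: "cmp T p i = idm T Z'"
    and wi: "cmp T w i = zer T Z' (shO T X)"
    and nz: "\<not> zero_object T Z'" and indY: "indecomposable T Y"
  shows "u = zer T X Y"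
proof -
  have u: "u \<in> hom T X Y" and v: "v \<in> hom T Y Z" using dist_hom d by blast+
  have X: "X \<in> Obj T" using hom_dom_Obj u .
  obtain g where g: "g \<in> hom T Z' Y" "i = cmp T v g"
    using dist_factor_first[OF dist_rotate[THEN iffD1, OF d] i wi] by blast
  have pv: "cmp T p v \<in> hom T Y Z'" using cmp_hom v p .
  have pvg: "cmp T (cmp T p v) g = idm T Z'" using pi g cmp_assoc[OF g(1) v p] by simp
  then have "iso T Z' Y g"
    using split_mono_indecomposable_iso nz indY g(1) pv unfolding split_mono_def by blast
  then obtain g' where g': "g' \<in> hom T Y Z'" "cmp T g g' = idm T Y" unfolding iso_def by blast
  have "cmp T p v = g'"
    using pvg g' cmp_idm_right[OF pv] cmp_assoc[OF g'(1) g(1) pv] cmp_idm_left[OF g'(1)] by simp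
  then have "u = cmp T g (cmp T p (cmp T v u))"
    using g' cmp_idm_left[OF u] cmp_assoc[OF u g'(1) g(1)] cmp_assoc[OF u v p] by simp
  then show ?thesis using dist_cmp_zer[OF d] cmp_zer[OF p X] cmp_zer[OF g(1) X] by simp
qed

lemma irreducible_mor_neq_zer:
  assumes irr: "irreducible_mor T X Y u"
    and nzX: "\<not> zero_object T X" and nzY: "\<not> zero_object T Y"
  shows "u \<noteq> zer T X Y"
proof
  assume u0: "u = zer T X Y"
  obtain Z where Z: "zero_object T Z" using zero_object_exists by blast
  have X: "X \<in> Obj T" and Y: "Y \<in> Obj T" and Z_Obj: "Z \<in> Obj T"
    using irr Z hom_dom_Obj hom_cod_Obj unfolding irreducible_mor_def zero_object_def by blast+
  have "u = cmp T (zer T Z Y) (zer T X Z)" using u0 zer_cmp[OF zer_hom[OF X Z_Obj] Y] by simp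
  then have "split_mono T X Z (zer T X Z) \<or> split_epi T Z Y (zer T Z Y)"
    using irr zer_hom X Y Z_Obj unfolding irreducible_mor_def by blast
  then show False
  proof
    assume "split_mono T X Z (zer T X Z)"
    then have "idm T X = zer T X X" using cmp_zer X unfolding split_mono_def by metis
    then show False using nzX zero_object_iff_idm_zer X by blast
  next
    assume "split_epi T Z Y (zer T Z Y)"
    then have "idm T Y = zer T Y Y" using zer_cmp Y unfolding split_epi_def by metis
    then show False using nzY zero_object_iff_idm_zer Y by blast
  qed
qed

lemma irreducible_cone_biproduct_summand_zero:
  assumes indX: "indecomposable T X" and indY: "indecomposable T Y"
    and irr: "irreducible_mor T X Y u" and d: "(X, u, Y, v, C, w) \<in> dist T"
    and bp: "biproduct T C1 C2 C i1 i2 p1 p2"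
  shows "zero_object T C1 \<or> zero_object T C2"
proof (rule ccontr)
  assume "\<not> (zero_object T C1 \<or> zero_object T C2)"
  then have nz1: "\<not> zero_object T C1" and nz2: "\<not> zero_object T C2" by auto
  have i1: "i1 \<in> hom T C1 C" and i2: "i2 \<in> hom T C2 C" and p1: "p1 \<in> hom T C C1"
    and p2: "p2 \<in> hom T C C2" and p1i1: "cmp T p1 i1 = idm T C1" and p2i2: "cmp T p2 i2 = idm T C2"
    and p2i1: "cmp T p2 i1 = zer T C1 C2"
    using bp unfolding biproduct_def by blast+
  have u_neq: "u \<noteq> zer T X Y"
    using irreducible_mor_neq_zer irr indX indY unfolding indecomposable_def by blast
  obtain Y1 u1 v1 f where d1: "(X, u1, Y1, v1, C1, cmp T w i1) \<in> dist T" and f: "f \<in> hom T Y1 Y"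
    and u: "u = cmp T f u1" and i1v1: "cmp T i1 v1 = cmp T v f"
    using dist_pullback_third[OF d i1] by blast
  have u1: "u1 \<in> hom T X Y1" and v1: "v1 \<in> hom T Y1 C1" and v: "v \<in> hom T Y C"
    using dist_hom d1 d by blast+
  have "split_mono T X Y1 u1 \<or> split_epi T Y1 Y f"
    using irr u1 f u unfolding irreducible_mor_def by blast
  then show False
  proof
    assume "split_mono T X Y1 u1"
    then have "cmp T w i1 = zer T C1 (shO T X)" using dist_split_mono_third_zer[OF d1] by blast
    then show False
      using dist_first_zer_of_section_killing_third[OF d i1 p1 p1i1 _ nz1 indY] u_neq by blast
  next
    assume "split_epi T Y1 Y f"
    then obtain s where s: "s \<in> hom T Y Y1" "cmp T f s = idm T Y" unfolding split_epi_def by blast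
    have "cmp T p2 v = cmp T p2 (cmp T (cmp T v f) s)"
      using s(2) cmp_idm_right[OF v] cmp_assoc[OF s(1) f v] by simp
    also have "\<dots> = cmp T (cmp T (cmp T p2 i1) v1) s"
      using i1v1 cmp_assoc[OF s(1) v1 cmp_hom[OF i1 p2]] cmp_assoc[OF s(1) cmp_hom[OF v1 i1] p2]
        cmp_assoc[OF v1 i1 p2] by simp
    also have "\<dots> = zer T Y C2"
      using p2i1 zer_cmp[OF v1 hom_cod_Obj[OF p2]] zer_cmp[OF s(1) hom_cod_Obj[OF p2]] by simp
    finally show False
      using dist_first_zer_of_retract_killing_second[OF d p2 i2 p2i2 _ nz2 indX] u_neq by blast
  qed
qed

end

theorem proposition6:
  fixes T :: "('o, 'm) tricat"
  assumes "triangulated T"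
    and "indecomposable T X" and "indecomposable T Y"
    and "irreducible_mor T X Y u"
    and "(X, u, Y, v, C, w) \<in> dist T"
  shows "indecomposable T C"
proof -
  interpret triangulated_cat T by (rule triangulated_cat.intro) fact
  have C: "C \<in> Obj T" using dist_hom hom_cod_Obj assms(5) by blast
  have "\<not> zero_object T C"
    using dist_third_zero_object_split_epi[OF assms(5)] assms(4) unfolding irreducible_mor_def by blast
  then show ?thesis
    unfolding indecomposable_def using C irreducible_cone_biproduct_summand_zero[OF assms(2-5)] by blast
qed

end
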